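(* Let $\varepsilon_{large}\ge 0$ and let $I'$ be a set of rectangles such that $\max_{i\in I'}h(i)\le(\frac12+2\varepsilon_{large})N$ and $\max_{i\in I'}w(i)\le(\frac12+2\varepsilon_{large})N$. Then for all $\alpha,\beta$ with $0\le\alpha,\beta\le\frac12-2\varepsilon_{large}$, if $$a(I')\le\Big(\frac12-(\alpha+\beta)\Big(\frac12+2\varepsilon_{large}\Big)-8\varepsilon_{large}^2\Big)N^2,$$ then all rectangles of $I'$ can be packed (without rotations, with pairwise disjoint interiors) into a box of width $(1-\alpha)N$ and height $(1-\beta)N$.
   Context: Rectangles are axis-parallel with width $w(i)$ and height $h(i)$; $a(I')=\sum_{i\in I'}w(i)h(i)$. *)

theory Defs
  imports Complex_Main
begin

definition area :: "('a \<Rightarrow> real) \<Rightarrow> ('a \<Rightarrow> real) \<Rightarrow> 'a set \<Rightarrow> real" where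
  "area w h I = (\<Sum>i\<in>I. w i * h i)"

definition rect_interior :: "real \<Rightarrow> real \<Rightarrow> real \<Rightarrow> real \<Rightarrow> (real \<times> real) set" where
  "rect_interior xi yi wi hi = {xi<..<xi + wi} \<times> {yi<..<yi + hi}"

definition packable :: "('a \<Rightarrow> real) \<Rightarrow> ('a \<Rightarrow> real) \<Rightarrow> 'a set \<Rightarrow> real \<Rightarrow> real \<Rightarrow> bool" where
  "packable w h I W H \<longleftrightarrow>
     (\<exists>x y :: 'a \<Rightarrow> real.
        (\<forall>i\<in>I. 0 \<le> x i \<and> x i + w i \<le> W \<and> 0 \<le> y i \<and> y i + h i \<le> H) \<and>
        (\<forall>i\<in>I. \<forall>j\<in>I. i \<noteq> j \<longrightarrow>
           rect_interior (x i) (y i) (w i) (h i) \<inter> rect_interior (x j) (y j) (w j) (h j) = {}))"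

end

theory Submission
  imports Defs
begin

text \<open>The hypotheses are Steinberg's condition for the box \<open>u \<times> v\<close> with
  \<open>u = (1 - \<alpha>) N\<close>, \<open>v = (1 - \<beta>) N\<close> and the bound \<open>a = b = (1/2 + 2 eps) N\<close> on all
  widths and heights: \<open>2 a(I) \<le> u v - (2a - u)\<^sub>+ (2b - v)\<^sub>+\<close>, since
  \<open>(2a - u)(2b - v) = (\<alpha> + 4 eps)(\<beta> + 4 eps) N\<^sup>2\<close>. If the widest rectangle is wider than \<open>u/2\<close>
  (or, symmetrically, the tallest taller than \<open>v/2\<close>), it is stacked under the rest, possibly
  with a row of tall rectangles beside it. Otherwise two rectangles that are both wider than
  \<open>u/4\<close> and taller than \<open>v/4\<close> can be placed in one column, or else the rectangles
  split into two groups of suitable area, each of which satisfies the condition in one of two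
  side-by-side boxes.\<close>

lemma packable_empty: "packable w h {} u v"
  by (auto simp: packable_def)

lemma packable_singleton:
  assumes "0 \<le> w i" "w i \<le> u" "0 \<le> h i" "h i \<le> v"
  shows "packable w h {i} u v"
  unfolding packable_def
  by (rule exI[of _ "\<lambda>_. 0"], rule exI[of _ "\<lambda>_. 0"]) (use assms in auto)

lemma packable_transpose:
  assumes "packable w h L u v"
  shows "packable h w L v u"
proof -
  from assms obtain x y where
    inside: "\<forall>i\<in>L. 0 \<le> x i \<and> x i + w i \<le> u \<and> 0 \<le> y i \<and> y i + h i \<le> v" and
    disjoint: "\<forall>i\<in>L. \<forall>j\<in>L. i \<noteq> j \<longrightarrow>
      rect_interior (x i) (y i) (w i) (h i) \<inter> rect_interior (x j) (y j) (w j) (h j) = {}"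
    unfolding packable_def by blast
  have swap: "rect_interior b a d c = prod.swap ` rect_interior a b c d" for a b c d
    by (auto simp: rect_interior_def)
  have "\<forall>i\<in>L. \<forall>j\<in>L. i \<noteq> j \<longrightarrow>
      rect_interior (y i) (x i) (h i) (w i) \<inter> rect_interior (y j) (x j) (h j) (w j) = {}"
  proof (intro ballI impI)
    fix i j assume "i \<in> L" "j \<in> L" "i \<noteq> j"
    with disjoint show "rect_interior (y i) (x i) (h i) (w i) \<inter> rect_interior (y j) (x j) (h j) (w j) = {}"
      by (simp add: swap[of _ "x i"] swap[of _ "x j"] flip: image_Int)
  qed
  with inside show ?thesis
    unfolding packable_def by (intro exI[of _ y] exI[of _ x]) auto
qed

lemma rect_interior_shift:
  "rect_interior (x0 + a) b c d = (\<lambda>(p, q). (x0 + p, q)) ` rect_interior a b c d"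
proof -
  have "(p, q) \<in> (\<lambda>(p, q). (x0 + p, q)) ` rect_interior a b c d"
    if "(p, q) \<in> rect_interior (x0 + a) b c d" for p q
    using that by (intro image_eqI[of _ _ "(p - x0, q)"]) (auto simp: rect_interior_def)
  then show ?thesis by (auto simp: rect_interior_def)
qed

lemma packable_side_by_side:
  assumes left: "packable w h L1 x0 v" and right: "packable w h L2 (u - x0) v"
    and "L1 \<inter> L2 = {}" and "0 \<le> x0" "x0 \<le> u"
  shows "packable w h (L1 \<union> L2) u v"
proof -
  from left obtain x1 y1 where
    inside1: "\<forall>i\<in>L1. 0 \<le> x1 i \<and> x1 i + w i \<le> x0 \<and> 0 \<le> y1 i \<and> y1 i + h i \<le> v" and
    disjoint1: "\<forall>i\<in>L1. \<forall>j\<in>L1. i \<noteq> j \<longrightarrow>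
      rect_interior (x1 i) (y1 i) (w i) (h i) \<inter> rect_interior (x1 j) (y1 j) (w j) (h j) = {}"
    unfolding packable_def by blast
  from right obtain x2 y2 where
    inside2: "\<forall>i\<in>L2. 0 \<le> x2 i \<and> x2 i + w i \<le> u - x0 \<and> 0 \<le> y2 i \<and> y2 i + h i \<le> v" and
    disjoint2: "\<forall>i\<in>L2. \<forall>j\<in>L2. i \<noteq> j \<longrightarrow>
      rect_interior (x2 i) (y2 i) (w i) (h i) \<inter> rect_interior (x2 j) (y2 j) (w j) (h j) = {}"
    unfolding packable_def by blast
  define x where "x i = (if i \<in> L1 then x1 i else x0 + x2 i)" for i
  define y where "y i = (if i \<in> L1 then y1 i else y2 i)" for i
  let ?R = "\<lambda>i. rect_interior (x i) (y i) (w i) (h i)"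
  have inside: "\<forall>i\<in>L1 \<union> L2. 0 \<le> x i \<and> x i + w i \<le> u \<and> 0 \<le> y i \<and> y i + h i \<le> v"
    using inside1 inside2 assms(4,5) by (auto simp: x_def y_def)
  have across: "?R i \<inter> ?R j = {}" if "i \<in> L1" "j \<in> L2" for i j
  proof -
    have "x i + w i \<le> x0" "x0 \<le> x j" using inside1 inside2 that assms(3) by (auto simp: x_def)
    then show ?thesis by (auto simp: rect_interior_def)
  qed
  have shifted: "?R i = (\<lambda>(p, q). (x0 + p, q)) ` rect_interior (x2 i) (y2 i) (w i) (h i)"
    if "i \<in> L2" for i
    using that assms(3) by (auto simp: x_def y_def rect_interior_shift)
  have "inj (\<lambda>(p, q). (x0 + p :: real, q :: real))" by (auto simp: inj_on_def)
  then have within2: "?R i \<inter> ?R j = {}" if "i \<in> L2" "j \<in> L2" "i \<noteq> j" for i j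
    using disjoint2 that by (simp add: shifted flip: image_Int)
  have "?R i \<inter> ?R j = {}" if ij: "i \<in> L1 \<union> L2" "j \<in> L1 \<union> L2" "i \<noteq> j" for i j
  proof -
    consider "i \<in> L1" "j \<in> L1" | "i \<in> L1" "j \<in> L2" | "i \<in> L2" "j \<in> L1" | "i \<in> L2" "j \<in> L2"
      using ij by blast
    then show ?thesis
    proof cases
      case 1
      then show ?thesis using disjoint1 ij(3) by (simp add: x_def y_def)
    next
      case 3
      then show ?thesis using across[of j i] by (simp add: Int_commute)
    qed (use across within2 ij(3) in blast)+
  qed
  with inside show ?thesis
    unfolding packable_def by (intro exI[of _ x] exI[of _ y] conjI) blast+
qed

lemma packable_stacked:
  assumes "packable w h L1 u y0" and "packable w h L2 u (v - y0)"
    and "L1 \<inter> L2 = {}" and "0 \<le> y0" "y0 \<le> v"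
  shows "packable w h (L1 \<union> L2) u v"
  using packable_transpose[OF packable_side_by_side[OF
        packable_transpose[OF assms(1)] packable_transpose[OF assms(2)] assms(3-5)]] .

lemma packable_row:
  assumes "finite L" "\<forall>i\<in>L. 0 \<le> w i \<and> 0 \<le> h i \<and> h i \<le> v" "sum w L \<le> u"
  shows "packable w h L u v"
  using assms
proof (induction L arbitrary: u rule: finite_induct)
  case empty
  show ?case by (rule packable_empty)
next
  case (insert s L)
  have "packable w h ({s} \<union> L) u v"
  proof (rule packable_side_by_side)
    show "packable w h {s} (w s) v"
      using insert.prems by (intro packable_singleton) auto
    show "packable w h L (u - w s) v"
      using insert by (intro insert.IH) auto
  qed (use insert sum_nonneg[of L w] in auto)
  then show ?case by simp
qed

lemma area_swap: "area h w L = area w h L"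
  unfolding area_def by (simp add: mult.commute)

lemma area_union:
  "finite A \<Longrightarrow> finite B \<Longrightarrow> A \<inter> B = {} \<Longrightarrow> area w h (A \<union> B) = area w h A + area w h B"
  unfolding area_def by (rule sum.union_disjoint)

lemma area_remove: "finite L \<Longrightarrow> r \<in> L \<Longrightarrow> area w h L = w r * h r + area w h (L - {r})"
  unfolding area_def by (rule sum.remove)

lemma area_doubleton: "i \<noteq> j \<Longrightarrow> area w h {i, j} = w i * h i + w j * h j"
  unfolding area_def by simp

lemma area_nonneg: "\<forall>i\<in>L. 0 < w i \<and> 0 < h i \<Longrightarrow> 0 \<le> area w h L"
  unfolding area_def by (intro sum_nonneg) (simp add: less_imp_le)

lemma area_mono:
  assumes "finite L" "A \<subseteq> L" "\<forall>i\<in>L. 0 < w i \<and> 0 < h i"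
  shows "area w h A \<le> area w h L"
  unfolding area_def using assms by (intro sum_mono2) (auto simp: less_imp_le)

lemma area_subsingleton_less:
  assumes "\<forall>i\<in>D. \<forall>j\<in>D. i = j" "\<forall>i\<in>D. 0 < w i \<and> 0 < h i \<and> w i < a \<and> h i < b"
    and "0 < a" "0 < b"
  shows "area w h D < a * b"
proof (cases "D = {}")
  case True
  with assms(3,4) show ?thesis by (simp add: area_def)
next
  case False
  then obtain p where "p \<in> D" by blast
  with assms(1) have "D = {p}" by blast
  moreover have "w p * h p < a * b" using assms(2) \<open>p \<in> D\<close> by (intro mult_strict_mono) auto
  ultimately show ?thesis by (simp add: area_def)
qed

lemma area_union_inter:
  "finite A \<Longrightarrow> finite B \<Longrightarrow> area w h A + area w h B = area w h (A \<union> B) + area w h (A \<inter> B)"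
  unfolding area_def by (rule sum.union_inter[symmetric])

text \<open>The strict bound \<open>c < h s\<close> makes this hold also for \<open>c = 0\<close>.\<close>
lemma width_sum_le_of_area_le:
  assumes "finite X" "\<forall>s\<in>X. 0 < w s \<and> c < h s" "0 \<le> c" "0 \<le> d" "area w h X \<le> d * c"
  shows "sum w X \<le> d"
proof (rule ccontr)
  assume "\<not> ?thesis"
  then have "d < sum w X" "X \<noteq> {}" using assms(4) by auto
  have "d * c \<le> sum w X * c" using \<open>d < sum w X\<close> assms(3) by (intro mult_right_mono) auto
  also have "\<dots> = (\<Sum>s\<in>X. w s * c)" by (simp add: sum_distrib_right)
  also have "\<dots> < area w h X"
    unfolding area_def using assms(1,2) \<open>X \<noteq> {}\<close>
    by (intro sum_strict_mono) (auto intro!: mult_strict_left_mono)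
  finally show False using assms(5) by simp
qed

text \<open>Greedy selection: if no single term exceeds the length of the target interval, some partial
  sum lands in it.\<close>
lemma exists_subset_sum_between:
  fixes f :: "'a \<Rightarrow> real"
  assumes "finite N" "s0 \<le> hi" "lo \<le> s0 + sum f N" "\<forall>i\<in>N. 0 \<le> f i \<and> f i \<le> hi - lo"
  shows "\<exists>X\<subseteq>N. lo \<le> s0 + sum f X \<and> s0 + sum f X \<le> hi"
  using assms
proof (induction N rule: finite_induct)
  case empty
  then show ?case by auto
next
  case (insert z N)
  show ?case
  proof (cases "lo \<le> s0 + sum f N")
    case True
    with insert obtain X where "X \<subseteq> N" "lo \<le> s0 + sum f X" "s0 + sum f X \<le> hi"
      by auto
    then show ?thesis by blast
  next
    case False
    with insert show ?thesis by (intro exI[of _ "insert z N"]) auto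
  qed
qed

lemma exists_subset_area_between:
  assumes "finite L" "B \<subseteq> L" "z \<in> L - B"
    and "area w h B \<le> hi" "lo \<le> area w h L - w z * h z"
    and "\<forall>i\<in>L - B. 0 \<le> w i * h i \<and> w i * h i \<le> hi - lo"
  obtains L1 where "B \<subseteq> L1" "L1 \<subseteq> L - {z}" "lo \<le> area w h L1" "area w h L1 \<le> hi"
proof -
  define N where "N = L - B - {z}"
  have finB: "finite B" using assms(1,2) by (rule finite_subset[rotated])
  have finN: "finite N" using assms(1) unfolding N_def by simp
  have disj: "B \<inter> N = {}" unfolding N_def by blast
  have union: "area w h (B \<union> X) = area w h B + sum (\<lambda>i. w i * h i) X" if "X \<subseteq> N" for X
  proof -
    have "finite X" "B \<inter> X = {}" using finite_subset[OF that finN] disj that by blast+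
    with finB show ?thesis unfolding area_def by (rule sum.union_disjoint)
  qed
  have "L - {z} = B \<union> N" using assms(2,3) unfolding N_def by blast
  then have "area w h L = w z * h z + (area w h B + sum (\<lambda>i. w i * h i) N)"
    using area_remove[OF assms(1), of z w h] assms(3) union[of N] by simp
  then have "lo \<le> area w h B + sum (\<lambda>i. w i * h i) N"
    using assms(5) by linarith
  moreover have "\<forall>i\<in>N. 0 \<le> w i * h i \<and> w i * h i \<le> hi - lo"
    using assms(6) unfolding N_def by blast
  ultimately have "\<exists>X\<subseteq>N. lo \<le> area w h B + sum (\<lambda>i. w i * h i) X \<and>
      area w h B + sum (\<lambda>i. w i * h i) X \<le> hi"
    by (rule exists_subset_sum_between[OF finN assms(4)])
  then obtain X where "X \<subseteq> N" "lo \<le> area w h B + sum (\<lambda>i. w i * h i) X"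
      "area w h B + sum (\<lambda>i. w i * h i) X \<le> hi"
    by blast
  moreover have "B \<union> X \<subseteq> L - {z}" using \<open>X \<subseteq> N\<close> assms(2,3) unfolding N_def by blast
  ultimately show ?thesis using that[of "B \<union> X"] union[of X] by simp
qed

lemma finite_has_maximizer:
  fixes f :: "'a \<Rightarrow> real"
  assumes "finite L" "L \<noteq> {}"
  obtains r where "r \<in> L" "\<forall>i\<in>L. f i \<le> f r"
proof -
  have "Max (f ` L) \<in> f ` L" using assms by (intro Max_in) auto
  then obtain r where "r \<in> L" "f r = Max (f ` L)" by auto
  with assms show thesis using that by auto
qed

text \<open>Steinberg's condition for packing \<open>L\<close> into a \<open>u \<times> v\<close> box, where \<open>a\<close> and \<open>b\<close>
  bound all widths and heights; \<open>max 0\<close> is the positive part.\<close>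
definition steinberg_condition ::
    "('a \<Rightarrow> real) \<Rightarrow> ('a \<Rightarrow> real) \<Rightarrow> 'a set \<Rightarrow> real \<Rightarrow> real \<Rightarrow> real \<Rightarrow> real \<Rightarrow> bool" where
  "steinberg_condition w h L u v a b \<longleftrightarrow> finite L \<and> (\<forall>i\<in>L. 0 < w i \<and> 0 < h i \<and> w i \<le> a \<and> h i \<le> b) \<and>
     a \<le> u \<and> b \<le> v \<and> 2 * area w h L \<le> u * v - max 0 (2 * a - u) * max 0 (2 * b - v)"

lemma steinberg_condition_swap:
  "steinberg_condition h w L v u b a \<longleftrightarrow> steinberg_condition w h L u v a b"
proof -
  have "steinberg_condition h w L v u b a" if "steinberg_condition w h L u v a b"
    for w h :: "'a \<Rightarrow> real" and u v a b
    using that unfolding steinberg_condition_def area_swap[of h w]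
    by (simp add: mult.commute[of v u] mult.commute[of "max 0 (2 * b - v)"] conj_ac)
  then show ?thesis by blast
qed

lemma widest_and_tallest_separable:
  assumes cond: "steinberg_condition w h L u v (w r) (h t)" and "r \<in> L" "t \<in> L" "r \<noteq> t"
    and wide: "u \<le> 2 * w r"
  shows "h r + h t \<le> v \<or> w r + w t \<le> u"
proof (rule ccontr)
  assume "\<not> ?thesis"
  then have tall: "v < h r + h t" and broad: "u < w r + w t" by auto
  from cond have fin: "finite L" and items: "\<forall>i\<in>L. 0 < w i \<and> 0 < h i \<and> w i \<le> w r \<and> h i \<le> h t"
    and area_L: "2 * area w h L \<le> u * v - max 0 (2 * w r - u) * max 0 (2 * h t - v)"
    unfolding steinberg_condition_def by blast+
  have r: "0 < w r" "0 < h r" "h r \<le> h t" and t: "0 < w t" "0 < h t"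
    using items assms(2,3) by auto
  have area_bound: "2 * area w h L \<le> u * v - (2 * w r - u) * (2 * h t - v)"
    using area_L wide tall r by (simp add: max_absorb2)
  have "w r * h r + w t * h t \<le> area w h L"
    using area_mono[OF fin, of "{r, t}"] area_doubleton[OF assms(4)] items assms(2,3) by auto
  moreover have "w r * (v - h t) < w r * h r" using tall r by (intro mult_strict_left_mono) auto
  moreover have "(u - w r) * h t < w t * h t" using broad t by (intro mult_strict_right_mono) auto
  moreover have "u * v - (2 * w r - u) * (2 * h t - v) = 2 * (w r * (v - h t)) + 2 * ((u - w r) * h t)"
    by (simp add: algebra_simps)
  ultimately show False using area_bound by linarith
qed

text \<open>Two rectangles wider than \<open>u/4\<close> and taller than \<open>v/4\<close> (but at most \<open>v/2\<close> tall) are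
  stacked in a column of width \<open>wi\<close> and height \<open>v\<close>.\<close>
lemma pair_column_area_bound_ordered:
  fixes wi hi wj hj u v :: real
  assumes "u < 4 * wi" "v < 4 * hi" "u < 4 * wj" "v < 4 * hj" "2 * hi < v" "0 < u" "0 < v"
    and "wj \<le> wi" and orient: "wi * v \<le> max hi hj * u"
  shows "wi * v \<le> 2 * wi * hi + 2 * wj * hj"
proof (cases "hj \<le> hi")
  case True
  then have orient_i: "wi * v \<le> hi * u" using orient by (simp add: max_def)
  have "hi * (v - 2 * hi) \<le> v\<^sup>2 / 8"
  proof -
    have "0 \<le> (4 * hi - v)\<^sup>2" by simp
    then show ?thesis by (simp add: power2_eq_square algebra_simps)
  qed
  then have "hi * u * (v - 2 * hi) \<le> u * (v\<^sup>2 / 8)"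
    using \<open>0 < u\<close> by (simp add: mult.commute mult.left_commute mult_left_mono)
  have "v * (wi * v - 2 * wi * hi) = wi * v * (v - 2 * hi)" by (simp add: algebra_simps)
  also have "\<dots> \<le> hi * u * (v - 2 * hi)"
    using orient_i assms(5) by (intro mult_right_mono) auto
  also have "\<dots> \<le> v * (u * v / 8)"
    using \<open>hi * u * (v - 2 * hi) \<le> u * (v\<^sup>2 / 8)\<close> by (simp add: power2_eq_square algebra_simps)
  also have "\<dots> < v * (2 * wj * hj)"
  proof -
    have "u * v < (4 * wj) * (4 * hj)" using assms by (intro mult_strict_mono) auto
    with \<open>0 < v\<close> show ?thesis by (intro mult_strict_left_mono) auto
  qed
  finally have "wi * v - 2 * wi * hi < 2 * wj * hj"
    using \<open>0 < v\<close> by (simp add: mult_less_cancel_left)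
  then show ?thesis by linarith
next
  case False
  then have "wi * v \<le> hj * u" using orient by (simp add: max_def)
  moreover have "wi * v \<le> wi * (4 * hi)" "u * hj \<le> (4 * wj) * hj"
    using assms by (auto intro!: mult_left_mono mult_right_mono)
  ultimately show ?thesis by (simp add: algebra_simps)
qed

lemma pair_column_area_bound:
  fixes wi hi wj hj u v :: real
  assumes "u < 4 * wi" "v < 4 * hi" "u < 4 * wj" "v < 4 * hj" "2 * hi < v" "2 * hj < v" "0 < u" "0 < v"
    and orient: "max wi wj * v \<le> max hi hj * u"
  shows "max wi wj * v \<le> 2 * wi * hi + 2 * wj * hj"
proof (cases "wj \<le> wi")
  case True
  with orient pair_column_area_bound_ordered[OF assms(1-5,7,8) True] show ?thesis
    by (simp add: max_def)
next
  case False
  then have "max wi wj = wj" "wi \<le> wj" by auto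
  with orient pair_column_area_bound_ordered[OF assms(3,4,1,2,6-8) \<open>wi \<le> wj\<close>] show ?thesis
    by (simp add: max.commute add.commute)
qed

text \<open>Since at most one rectangle is both wider than \<open>u/4\<close> and taller than \<open>v/4\<close>,
  inclusion-exclusion bounds the area of the wide ones plus that of the tall ones by \<open>3/4 u v\<close>.\<close>
lemma wide_or_tall_part_light:
  assumes fin: "finite L" and two: "2 \<le> card L"
    and items: "\<forall>i\<in>L. 0 < w i \<and> 0 < h i \<and> 2 * w i < u \<and> 2 * h i < v"
    and area_L: "2 * area w h L \<le> u * v"
    and single: "\<forall>i\<in>L. \<forall>j\<in>L. u < 4 * w i \<and> v < 4 * h i \<longrightarrow> u < 4 * w j \<and> v < 4 * h j \<longrightarrow> i = j"
  shows "{i\<in>L. u < 4 * w i} \<noteq> L \<and> 8 * area w h {i\<in>L. u < 4 * w i} \<le> 3 * u * v \<or>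
    {i\<in>L. v < 4 * h i} \<noteq> L \<and> 8 * area w h {i\<in>L. v < 4 * h i} \<le> 3 * u * v"
proof (rule ccontr)
  define W where "W = {i\<in>L. u < 4 * w i}"
  define T where "T = {i\<in>L. v < 4 * h i}"
  assume "\<not> ?thesis"
  then have heavy: "W \<noteq> L \<Longrightarrow> 3 * u * v < 8 * area w h W" "T \<noteq> L \<Longrightarrow> 3 * u * v < 8 * area w h T"
    unfolding W_def T_def by auto
  have fin_WT: "finite W" "finite T" using fin unfolding W_def T_def by auto
  have pos: "\<forall>i\<in>L. 0 < w i \<and> 0 < h i" using items by blast
  obtain i where "i \<in> L" using two by (metis card.empty ex_in_conv not_numeral_le_zero)
  then have "0 < w i" "2 * w i < u" "0 < h i" "2 * h i < v" using items by auto
  then have "0 < u" "0 < v" by linarith+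
  have "\<forall>i\<in>W \<inter> T. \<forall>j\<in>W \<inter> T. i = j" using single unfolding W_def T_def by blast
  moreover have "\<forall>i\<in>W \<inter> T. 0 < w i \<and> 0 < h i \<and> w i < u / 2 \<and> h i < v / 2"
    using items unfolding W_def T_def by auto
  ultimately have "area w h (W \<inter> T) < (u / 2) * (v / 2)"
    using \<open>0 < u\<close> \<open>0 < v\<close> by (intro area_subsingleton_less) auto
  then have area_WT: "area w h (W \<inter> T) < u * v / 4" by simp
  have WT_L: "W = L \<Longrightarrow> W \<inter> T = T" "T = L \<Longrightarrow> W \<inter> T = W"
    unfolding W_def T_def by auto
  have "0 < u * v" using \<open>0 < u\<close> \<open>0 < v\<close> by simp
  show False
  proof (cases "W = L"; cases "T = L")
    assume "W = L" "T = L"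
    then have "\<forall>i\<in>L. \<forall>j\<in>L. i = j"
      using single unfolding W_def T_def by blast
    then have "card L \<le> 1" using card_le_Suc0_iff_eq[OF fin] by simp
    with two show False by simp
  next
    assume "W = L" "T \<noteq> L"
    with heavy(2) area_WT WT_L(1) \<open>0 < u * v\<close> show False by auto
  next
    assume "W \<noteq> L" "T = L"
    with heavy(1) area_WT WT_L(2) \<open>0 < u * v\<close> show False by auto
  next
    assume "W \<noteq> L" "T \<noteq> L"
    have "area w h W + area w h T = area w h (W \<union> T) + area w h (W \<inter> T)"
      using area_union_inter[OF fin_WT] .
    moreover have "area w h (W \<union> T) \<le> area w h L"
      using fin pos by (intro area_mono) (auto simp: W_def T_def)
    ultimately show False
      using heavy \<open>W \<noteq> L\<close> \<open>T \<noteq> L\<close> area_WT area_L by linarith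
  qed
qed

context
  fixes L :: "'a set"
  assumes packable_smaller: "\<And>(L' :: 'a set) w h u v a b. card L' < card L \<Longrightarrow>
    steinberg_condition w h L' u v a b \<Longrightarrow> packable w h L' u v"
begin

lemma packable_with_bottom_rectangle:
  assumes "finite L" "r \<in> L" "0 \<le> w r" "w r \<le> u" "0 \<le> h r" "h r \<le> v"
    and "steinberg_condition w h (L - {r}) u (v - h r) a b"
  shows "packable w h L u v"
proof -
  have "packable w h ({r} \<union> (L - {r})) u v"
  proof (rule packable_stacked)
    show "packable w h {r} u (h r)" using assms by (intro packable_singleton) auto
    show "packable w h (L - {r}) u (v - h r)"
      using assms by (intro packable_smaller[OF _ assms(7)] card_Diff1_less)
  qed (use assms in auto)
  with assms(2) show ?thesis by (simp add: insert_absorb)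
qed

text \<open>The widest rectangle \<open>r\<close> is wider than \<open>u/2\<close> and fits under the tallest one:
  it goes to the bottom, and the rest still satisfies the condition in the remaining box.\<close>
lemma packable_widest_at_bottom:
  assumes cond: "steinberg_condition w h L u v (w r) (h t)" and r: "r \<in> L"
    and wide: "u \<le> 2 * w r" and fits: "h r + h t \<le> v"
  shows "packable w h L u v"
proof -
  from cond have fin: "finite L" and items: "\<forall>i\<in>L. 0 < w i \<and> 0 < h i \<and> w i \<le> w r \<and> h i \<le> h t"
    and "w r \<le> u" "h t \<le> v"
    and area_L: "2 * area w h L \<le> u * v - (2 * w r - u) * max 0 (2 * h t - v)"
    using wide unfolding steinberg_condition_def by (auto simp: max_absorb2)
  have hr: "0 < w r" "0 < h r" "h r \<le> h t" using items r by auto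
  have "area w h L = w r * h r + area w h (L - {r})" using area_remove[OF fin r] .
  moreover have "(2 * w r - u) * max 0 (2 * h t - (v - h r))
      \<le> (2 * w r - u) * max 0 (2 * h t - v) + (2 * w r - u) * h r"
    using wide hr by (subst distrib_left[symmetric], intro mult_left_mono) auto
  ultimately have "2 * area w h (L - {r})
      \<le> u * (v - h r) - max 0 (2 * w r - u) * max 0 (2 * h t - (v - h r))"
    using area_L wide by (simp add: max_absorb2 algebra_simps)
  then have "steinberg_condition w h (L - {r}) u (v - h r) (w r) (h t)"
    using fin items fits \<open>w r \<le> u\<close> unfolding steinberg_condition_def by auto
  with fin r hr \<open>w r \<le> u\<close> fits show ?thesis
    by (intro packable_with_bottom_rectangle) (auto simp: less_imp_le)
qed

text \<open>The rectangle \<open>r\<close> is the widest and the tallest and is larger than half the box in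
  both directions: the rectangles taller than \<open>v - h r\<close> form a row beside \<open>r\<close>, the
  others go on top.\<close>
lemma packable_largest_in_corner:
  assumes cond: "steinberg_condition w h L u v (w r) (h r)" and r: "r \<in> L"
    and wide: "u \<le> 2 * w r" and tall: "v \<le> 2 * h r"
  shows "packable w h L u v"
proof -
  from cond have fin: "finite L" and items: "\<forall>i\<in>L. 0 < w i \<and> 0 < h i \<and> w i \<le> w r \<and> h i \<le> h r"
    and "w r \<le> u" "h r \<le> v"
    and area_L: "2 * area w h L \<le> u * v - (2 * w r - u) * (2 * h r - v)"
    using wide tall unfolding steinberg_condition_def by (auto simp: max_absorb2)
  have "0 < w r" "0 < h r" using items r by auto
  have excess: "0 \<le> (2 * w r - u) * (2 * h r - v)" using wide tall by simp
  define X where "X = {s \<in> L - {r}. v - h r < h s}"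
  define Y where "Y = {s \<in> L - {r}. h s \<le> v - h r}"
  have fin_XY: "finite X" "finite Y" using fin unfolding X_def Y_def by auto
  have L_split: "L = ({r} \<union> X) \<union> Y" "({r} \<union> X) \<inter> Y = {}" "{r} \<inter> X = {}"
    using r unfolding X_def Y_def by auto
  have area_split: "area w h L = w r * h r + area w h X + area w h Y"
    using L_split fin_XY by (simp add: area_def sum.union_disjoint)
  have area_XY: "0 \<le> area w h X" "0 \<le> area w h Y"
    using items unfolding X_def Y_def by (auto intro!: area_nonneg)
  have "u * v - (2 * w r - u) * (2 * h r - v)
      = 2 * (w r * h r) + 2 * ((u - w r) * (v - h r)) - 2 * ((2 * w r - u) * (2 * h r - v))"
    by (simp add: algebra_simps)
  then have "area w h X \<le> (u - w r) * (v - h r)"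
    using area_L area_split area_XY excess by linarith
  then have width_X: "sum w X \<le> u - w r"
    using fin_XY items \<open>w r \<le> u\<close> \<open>h r \<le> v\<close>
    by (intro width_sum_le_of_area_le) (auto simp: X_def)
  have bottom: "packable w h ({r} \<union> X) u (h r)"
  proof (rule packable_side_by_side)
    show "packable w h {r} (w r) (h r)" using \<open>0 < w r\<close> \<open>0 < h r\<close> by (intro packable_singleton) auto
    show "packable w h X (u - w r) (h r)"
      using items width_X fin_XY by (intro packable_row) (auto simp: X_def less_imp_le)
  qed (use L_split \<open>0 < w r\<close> \<open>w r \<le> u\<close> in auto)
  have "2 * area w h Y \<le> u * (v - h r) - max 0 (2 * w r - u) * max 0 (2 * (v - h r) - (v - h r))"
  proof -
    have "u * v - (2 * w r - u) * (2 * h r - v) - 2 * (w r * h r)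
        = u * (v - h r) - (2 * w r - u) * (v - h r) - 2 * ((2 * w r - u) * (2 * h r - v))"
      by (simp add: algebra_simps)
    moreover have "max 0 (2 * w r - u) * max 0 (2 * (v - h r) - (v - h r)) = (2 * w r - u) * (v - h r)"
      using wide \<open>h r \<le> v\<close> by (simp add: max_absorb2)
    ultimately show ?thesis using area_L area_split area_XY excess by linarith
  qed
  then have "steinberg_condition w h Y u (v - h r) (w r) (v - h r)"
    using fin_XY items \<open>w r \<le> u\<close> unfolding steinberg_condition_def Y_def by auto
  moreover have "card Y < card L"
    using fin r unfolding Y_def by (intro psubset_card_mono) auto
  ultimately have top: "packable w h Y u (v - h r)" by (rule packable_smaller[rotated])
  have "packable w h (({r} \<union> X) \<union> Y) u v"
    using packable_stacked[OF bottom top L_split(2)] \<open>0 < h r\<close> \<open>h r \<le> v\<close> by simp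
  with L_split(1) show ?thesis by simp
qed

lemma packable_if_widest_wide:
  assumes cond: "steinberg_condition w h L u v (w r) (h t)" and r: "r \<in> L" and t: "t \<in> L"
    and wide: "u \<le> 2 * w r"
  shows "packable w h L u v"
proof -
  have "h r \<le> h t" "w t \<le> w r" "0 < w r"
    using cond r t unfolding steinberg_condition_def by auto
  consider "h r + h t \<le> v" | "r = t" "v \<le> 2 * h r" | "r \<noteq> t" "w r + w t \<le> u" "v \<le> 2 * h t"
    using widest_and_tallest_separable[OF cond r t _ wide] \<open>h r \<le> h t\<close> by fastforce
  then show ?thesis
  proof cases
    case 1
    with cond r wide show ?thesis by (rule packable_widest_at_bottom)
  next
    case 2
    with cond r wide show ?thesis by (intro packable_largest_in_corner) auto
  next
    case 3
    have "steinberg_condition h w L v u (h t) (w r)" using cond steinberg_condition_swap by blast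
    from packable_widest_at_bottom[OF this t] 3 have "packable h w L v u"
      by (simp add: add.commute)
    then show ?thesis by (rule packable_transpose)
  qed
qed

text \<open>Two rectangles that are both wider than \<open>u/4\<close> and taller than \<open>v/4\<close> are stacked in a
  column at the left; the rest goes to the right.\<close>
lemma packable_pair_column:
  assumes cond: "steinberg_condition w h L u v (w r) (h t)" and r: "r \<in> L"
    and narrow: "2 * w r < u" and low: "2 * h t < v"
    and ij: "i \<in> L" "j \<in> L" "i \<noteq> j"
    and big: "u < 4 * w i" "v < 4 * h i" "u < 4 * w j" "v < 4 * h j"
    and orient: "max (w i) (w j) * v \<le> max (h i) (h j) * u"
  shows "packable w h L u v"
proof -
  from cond have fin: "finite L" and items: "\<forall>i\<in>L. 0 < w i \<and> 0 < h i \<and> w i \<le> w r \<and> h i \<le> h t"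
    and area_L: "2 * area w h L \<le> u * v"
    using low unfolding steinberg_condition_def by (auto simp: max_absorb1)
  have "0 < u" "0 < v" using items r narrow low by force+
  have "0 < w i" "0 < h i" "h i \<le> h t" "0 < w j" "0 < h j" "h j \<le> h t"
    using items ij by auto
  define g where "g = max (w i) (w j)"
  have g: "w i \<le> g" "w j \<le> g" "g \<le> w r" "0 \<le> g" using items ij unfolding g_def by auto
  have column: "packable w h ({i} \<union> {j}) g v"
  proof (rule packable_stacked)
    show "packable w h {i} g (h i)" using g \<open>0 < w i\<close> \<open>0 < h i\<close> by (intro packable_singleton) auto
    show "packable w h {j} g (v - h i)"
      using g \<open>0 < w j\<close> \<open>0 < h j\<close> \<open>h i \<le> h t\<close> \<open>h j \<le> h t\<close> low by (intro packable_singleton) auto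
  qed (use ij \<open>0 < h i\<close> \<open>h i \<le> h t\<close> low in auto)
  define R where "R = L - {i, j}"
  have "L = {i, j} \<union> R" using ij unfolding R_def by auto
  then have "area w h L = w i * h i + w j * h j + area w h R"
    using fin area_union[of "{i, j}" R] area_doubleton[OF ij(3)] unfolding R_def by auto
  moreover have "g * v \<le> 2 * w i * h i + 2 * w j * h j"
    unfolding g_def
    using pair_column_area_bound[OF big _ _ \<open>0 < u\<close> \<open>0 < v\<close> orient] \<open>h i \<le> h t\<close> \<open>h j \<le> h t\<close> low
    by linarith
  ultimately have "2 * area w h R \<le> (u - g) * v" using area_L by (simp add: algebra_simps)
  then have "steinberg_condition w h R (u - g) v (w r) (h t)"
    using fin items g narrow low \<open>0 < h i\<close> \<open>h i \<le> h t\<close>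
    unfolding steinberg_condition_def R_def by auto
  moreover have "card R < card L" using fin ij unfolding R_def by (intro psubset_card_mono) auto
  ultimately have "packable w h R (u - g) v" by (rule packable_smaller[rotated])
  then have "packable w h (({i} \<union> {j}) \<union> R) u v"
    by (rule packable_side_by_side[OF column]) (use g narrow in \<open>auto simp: R_def\<close>)
  moreover have "({i} \<union> {j}) \<union> R = L" using ij unfolding R_def by auto
  ultimately show ?thesis by simp
qed

text \<open>A part \<open>L1\<close> containing the widest rectangle, whose area is neither too large nor too
  small, goes into a left column of width \<open>max (w r) (2 a(L1) / v)\<close>; the remaining
  rectangles, all at most \<open>u/4\<close> wide, go into the right column.\<close>
lemma packable_columns_by_area:
  assumes cond: "steinberg_condition w h L u v (w r) (h t)" and r: "r \<in> L1"
    and L1: "L1 \<subseteq> L" "L1 \<noteq> L" and narrow: "2 * w r < u" and low: "2 * h t < v"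
    and rest_narrow: "\<forall>i\<in>L - L1. 4 * w i \<le> u"
    and upper: "2 * area w h L1 \<le> 3/4 * u * v"
    and lower: "2 * area w h L - (u - w r) * v \<le> 2 * area w h L1"
  shows "packable w h L u v"
proof -
  from cond have fin: "finite L" and items: "\<forall>i\<in>L. 0 < w i \<and> 0 < h i \<and> w i \<le> w r \<and> h i \<le> h t"
    and area_L: "2 * area w h L \<le> u * v"
    using low unfolding steinberg_condition_def by (auto simp: max_absorb1)
  have "r \<in> L" "0 < w r" "0 < h r" "h r \<le> h t" using items r L1 by auto
  then have "0 < u" "0 < v" "h t \<le> v" using narrow low by linarith+
  define L2 where "L2 = L - L1"
  have fin12: "finite L1" "finite L2" using fin L1 unfolding L2_def by (auto intro: finite_subset)
  have area_L12: "area w h L = area w h L1 + area w h L2"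
    using area_union[OF fin12] L1(1) unfolding L2_def by (simp add: Un_absorb1 Un_Diff_cancel)
  define x0 where "x0 = max (w r) (2 * area w h L1 / v)"
  have "2 * area w h L1 / v \<le> 3/4 * u"
    using upper \<open>0 < v\<close> by (simp add: pos_divide_le_eq mult.commute mult.left_commute)
  then have "x0 \<le> 3/4 * u" using narrow \<open>0 < w r\<close> unfolding x0_def by (intro max.boundedI) auto
  moreover have "w r \<le> x0" "2 * area w h L1 / v \<le> x0" unfolding x0_def by simp_all
  ultimately have x0: "w r \<le> x0" "2 * area w h L1 \<le> x0 * v" "x0 \<le> 3/4 * u"
    using \<open>0 < v\<close> by (simp_all add: pos_divide_le_eq)
  have "2 * area w h L2 \<le> (u - x0) * v"
  proof (cases "w r \<le> 2 * area w h L1 / v")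
    case True
    then have "(u - x0) * v = u * v - 2 * area w h L1" using \<open>0 < v\<close> by (simp add: x0_def algebra_simps)
    then show ?thesis using area_L12 area_L by linarith
  next
    case False
    then show ?thesis using area_L12 lower by (simp add: x0_def algebra_simps)
  qed
  then have cond2: "steinberg_condition w h L2 (u - x0) v (u / 4) (h t)"
    using fin12 items rest_narrow x0 low \<open>h t \<le> v\<close> unfolding steinberg_condition_def L2_def
    by (auto simp: mult.commute)
  have cond1: "steinberg_condition w h L1 x0 v (w r) (h t)"
    using fin12 items L1 x0 low \<open>h t \<le> v\<close> unfolding steinberg_condition_def by auto
  have "card L1 < card L" using fin L1 by (intro psubset_card_mono) auto
  moreover have "card L2 < card L" using fin r L1 unfolding L2_def by (intro psubset_card_mono) auto
  ultimately have "packable w h (L1 \<union> L2) u v"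
    using packable_smaller[OF _ cond1] packable_smaller[OF _ cond2] x0 \<open>0 < w r\<close>
    by (intro packable_side_by_side) (auto simp: L2_def)
  with L1 show ?thesis unfolding L2_def by (simp add: Un_absorb1)
qed

text \<open>A light part \<open>B\<close> containing the widest rectangle is completed greedily by narrow
  rectangles to a part \<open>L1\<close> of suitable area.\<close>
lemma packable_if_light_part_with_widest:
  assumes cond: "steinberg_condition w h L u v (w r) (h t)" and r: "r \<in> B"
    and narrow: "2 * w r < u" and low: "2 * h t < v"
    and B: "B \<subseteq> L" "B \<noteq> L" and rest_narrow: "\<forall>i\<in>L - B. 4 * w i \<le> u"
    and area_B: "area w h B \<le> 3/8 * u * v"
  shows "packable w h L u v"
proof -
  from cond have fin: "finite L" and items: "\<forall>i\<in>L. 0 < w i \<and> 0 < h i \<and> w i \<le> w r \<and> h i \<le> h t"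
    and area_L: "2 * area w h L \<le> u * v"
    using low unfolding steinberg_condition_def by (auto simp: max_absorb1)
  have "0 < w r" "0 < h r" "h r \<le> h t" using items r B by auto
  then have "0 < u * v" "2 * (w r * v) \<le> u * v" using narrow low by auto
  have rest_small: "\<forall>i\<in>L - B. 0 \<le> w i * h i \<and> w i * h i \<le> u * v / 8"
  proof
    fix i assume "i \<in> L - B"
    with items rest_narrow have "0 < w i" "0 < h i" "4 * w i \<le> u" "h i \<le> h t" by auto
    moreover from this have "w i * h i \<le> (u / 4) * (v / 2)" using low by (intro mult_mono) auto
    ultimately show "0 \<le> w i * h i \<and> w i * h i \<le> u * v / 8" by simp
  qed
  obtain z where z: "z \<in> L - B" using B by blast
  define lo where "lo = area w h L - (u - w r) * v / 2"
  have lo_eq: "lo = area w h L - (u * v) / 2 + (w r * v) / 2" unfolding lo_def by (simp add: field_simps)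
  moreover have "3/8 * u * v = 3/8 * (u * v)" by simp
  ultimately have "u * v / 8 \<le> 3/8 * u * v - lo"
    using area_L \<open>2 * (w r * v) \<le> u * v\<close> by linarith
  then have "\<forall>i\<in>L - B. 0 \<le> w i * h i \<and> w i * h i \<le> 3/8 * u * v - lo"
    using rest_small by (blast intro: order_trans)
  moreover have "lo \<le> area w h L - w z * h z"
  proof -
    have "w z * h z \<le> u * v / 8" using rest_small z by blast
    with lo_eq \<open>2 * (w r * v) \<le> u * v\<close> \<open>0 < u * v\<close> show ?thesis by linarith
  qed
  ultimately obtain L1 where L1: "B \<subseteq> L1" "L1 \<subseteq> L - {z}"
    and lower: "lo \<le> area w h L1" and upper: "area w h L1 \<le> 3/8 * u * v"
    using exists_subset_area_between[OF fin B(1) z area_B] by metis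
  show ?thesis
  proof (rule packable_columns_by_area[OF cond])
    show "r \<in> L1" "L1 \<subseteq> L" "L1 \<noteq> L" using L1 z r by auto
    show "\<forall>i\<in>L - L1. 4 * w i \<le> u" using L1 rest_narrow by blast
  qed (use narrow low lower upper in \<open>auto simp: lo_def\<close>)
qed

lemma packable_if_wide_part_light:
  assumes cond: "steinberg_condition w h L u v (w r) (h t)" and r: "r \<in> L"
    and narrow: "2 * w r < u" and low: "2 * h t < v" and two: "2 \<le> card L"
    and proper: "{i\<in>L. u < 4 * w i} \<noteq> L" and light: "8 * area w h {i\<in>L. u < 4 * w i} \<le> 3 * u * v"
  shows "packable w h L u v"
proof -
  define W where "W = {i\<in>L. u < 4 * w i}"
  have items: "\<forall>i\<in>L. 0 < w i \<and> 0 < h i \<and> w i \<le> w r \<and> h i \<le> h t"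
    using cond unfolding steinberg_condition_def by blast
  have "area w h (W \<union> {r}) \<le> 3/8 * u * v \<and> W \<union> {r} \<noteq> L"
  proof (cases "r \<in> W")
    case True
    then have "W \<union> {r} = W" by auto
    with light proper show ?thesis unfolding W_def by simp
  next
    case False
    then have "W = {}" using items r unfolding W_def by force
    moreover have "w r * h r \<le> (u / 4) * (v / 2)"
      using False items r low unfolding W_def by (intro mult_mono) auto
    moreover have "L \<noteq> {r}" using two by auto
    moreover have "0 < w r * h r" using items r by simp
    ultimately show ?thesis by (simp add: area_def)
  qed
  moreover have "\<forall>i\<in>L - (W \<union> {r}). 4 * w i \<le> u" unfolding W_def by auto
  ultimately show ?thesis
    using r by (intro packable_if_light_part_with_widest[OF cond _ narrow low]) (auto simp: W_def)
qed

lemma packable_if_two_big: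
  assumes cond: "steinberg_condition w h L u v (w r) (h t)" and r: "r \<in> L" and t: "t \<in> L"
    and narrow: "2 * w r < u" and low: "2 * h t < v"
    and ij: "i \<in> L" "j \<in> L" "i \<noteq> j"
    and big: "u < 4 * w i" "v < 4 * h i" "u < 4 * w j" "v < 4 * h j"
  shows "packable w h L u v"
proof (cases "max (w i) (w j) * v \<le> max (h i) (h j) * u")
  case True
  with cond r narrow low ij big show ?thesis by (rule packable_pair_column)
next
  case False
  then have "max (h i) (h j) * u \<le> max (w i) (w j) * v" by simp
  moreover have "steinberg_condition h w L v u (h t) (w r)"
    using cond steinberg_condition_swap by blast
  ultimately have "packable h w L v u"
    using packable_pair_column[OF _ t low narrow ij big(2,1,4,3)] by blast
  then show ?thesis by (rule packable_transpose)
qed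

lemma packable_if_one_big:
  assumes cond: "steinberg_condition w h L u v (w r) (h t)" and r: "r \<in> L" and t: "t \<in> L"
    and narrow: "2 * w r < u" and low: "2 * h t < v" and two: "2 \<le> card L"
    and single: "\<forall>i\<in>L. \<forall>j\<in>L. u < 4 * w i \<and> v < 4 * h i \<longrightarrow> u < 4 * w j \<and> v < 4 * h j \<longrightarrow> i = j"
  shows "packable w h L u v"
proof -
  from cond have fin: "finite L" and items: "\<forall>i\<in>L. 0 < w i \<and> 0 < h i \<and> w i \<le> w r \<and> h i \<le> h t"
    and area_L: "2 * area w h L \<le> u * v"
    using low unfolding steinberg_condition_def by (auto simp: max_absorb1)
  have "\<forall>i\<in>L. 0 < w i \<and> 0 < h i \<and> 2 * w i < u \<and> 2 * h i < v"
  proof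
    fix i assume "i \<in> L"
    with items have "0 < w i" "0 < h i" "w i \<le> w r" "h i \<le> h t" by auto
    with narrow low show "0 < w i \<and> 0 < h i \<and> 2 * w i < u \<and> 2 * h i < v" by linarith
  qed
  from wide_or_tall_part_light[OF fin two this area_L single] show ?thesis
  proof
    assume "{i\<in>L. u < 4 * w i} \<noteq> L \<and> 8 * area w h {i\<in>L. u < 4 * w i} \<le> 3 * u * v"
    then show ?thesis using packable_if_wide_part_light[OF cond r narrow low two] by blast
  next
    assume tall_light: "{i\<in>L. v < 4 * h i} \<noteq> L \<and> 8 * area w h {i\<in>L. v < 4 * h i} \<le> 3 * u * v"
    have "3 * u * v = 3 * v * u" by simp
    with tall_light have "8 * area h w {i\<in>L. v < 4 * h i} \<le> 3 * v * u" by (simp only: area_swap)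
    moreover have "steinberg_condition h w L v u (h t) (w r)"
      using cond steinberg_condition_swap by blast
    ultimately have "packable h w L v u"
      using tall_light t low narrow two
        packable_if_wide_part_light[where w = h and h = w and u = v and v = u and r = t and t = r]
      by blast
    then show ?thesis by (rule packable_transpose)
  qed
qed

lemma packable_if_narrow_and_low:
  assumes cond: "steinberg_condition w h L u v (w r) (h t)" and r: "r \<in> L" and t: "t \<in> L"
    and narrow: "2 * w r < u" and low: "2 * h t < v"
  shows "packable w h L u v"
proof (cases "card L \<le> 1")
  case True
  from cond r have "finite L" "0 < w r" "0 < h r" "h r \<le> h t" "w r \<le> u" "h t \<le> v"
    unfolding steinberg_condition_def by auto
  then have "packable w h {r} u v" by (intro packable_singleton) auto
  moreover have "L = {r}" using True r card_le_Suc0_iff_eq[OF \<open>finite L\<close>] by auto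
  ultimately show ?thesis by simp
next
  case False
  then have two: "2 \<le> card L" by simp
  show ?thesis
  proof (cases "\<exists>i\<in>L. \<exists>j\<in>L. i \<noteq> j \<and> u < 4 * w i \<and> v < 4 * h i \<and> u < 4 * w j \<and> v < 4 * h j")
    case True
    with packable_if_two_big[OF cond r t narrow low] show ?thesis by blast
  next
    case False
    with packable_if_one_big[OF cond r t narrow low two] show ?thesis by blast
  qed
qed

lemma packable_if_steinberg_condition_step:
  assumes cond: "steinberg_condition w h L u v a b"
  shows "packable w h L u v"
proof (cases "L = {}")
  case True
  then show ?thesis by (simp add: packable_empty)
next
  case False
  from cond have fin: "finite L" and items: "\<forall>i\<in>L. 0 < w i \<and> 0 < h i \<and> w i \<le> a \<and> h i \<le> b"
    unfolding steinberg_condition_def by blast+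
  obtain r where r: "r \<in> L" "\<forall>i\<in>L. w i \<le> w r" using finite_has_maximizer[OF fin False] .
  obtain t where t: "t \<in> L" "\<forall>i\<in>L. h i \<le> h t" using finite_has_maximizer[OF fin False] .
  have "w r \<le> a" "h t \<le> b" using items r t by auto
  then have "max 0 (2 * w r - u) * max 0 (2 * h t - v) \<le> max 0 (2 * a - u) * max 0 (2 * b - v)"
    by (intro mult_mono) auto
  with cond r t \<open>w r \<le> a\<close> \<open>h t \<le> b\<close> have cond': "steinberg_condition w h L u v (w r) (h t)"
    unfolding steinberg_condition_def by auto
  consider "u \<le> 2 * w r" | "v \<le> 2 * h t" | "2 * w r < u" "2 * h t < v" by linarith
  then show ?thesis
  proof cases
    case 1
    with cond' r t show ?thesis by (intro packable_if_widest_wide)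
  next
    case 2
    with cond' r t steinberg_condition_swap have "packable h w L v u"
      by (blast intro: packable_if_widest_wide)
    then show ?thesis by (rule packable_transpose)
  next
    case 3
    with cond' r t show ?thesis by (intro packable_if_narrow_and_low)
  qed
qed

end

theorem steinberg_packing: "steinberg_condition w h L u v a b \<Longrightarrow> packable w h L u v"
proof (induction "card L" arbitrary: L w h u v a b rule: less_induct)
  case less
  show ?case by (rule packable_if_steinberg_condition_step[OF less.hyps less.prems])
qed

theorem mainTheorem15:
  fixes w h :: "'a \<Rightarrow> real" and I :: "'a set" and N eps \<alpha> \<beta> :: real
  assumes "finite I"
    and "N > 0"
    and "\<forall>i\<in>I. w i > 0 \<and> h i > 0"
    and "eps \<ge> 0"
    and "\<forall>i\<in>I. h i \<le> (1/2 + 2*eps) * N"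
    and "\<forall>i\<in>I. w i \<le> (1/2 + 2*eps) * N"
    and "0 \<le> \<alpha>" and "\<alpha> \<le> 1/2 - 2*eps"
    and "0 \<le> \<beta>" and "\<beta> \<le> 1/2 - 2*eps"
    and "area w h I \<le> (1/2 - (\<alpha> + \<beta>) * (1/2 + 2*eps) - 8 * eps^2) * N^2"
  shows "packable w h I ((1 - \<alpha>) * N) ((1 - \<beta>) * N)"
proof -
  define d where "d = (1/2 + 2*eps) * N"
  have "d \<le> (1 - \<alpha>) * N" "d \<le> (1 - \<beta>) * N"
    unfolding d_def using assms by (auto intro!: mult_right_mono)
  moreover have "max 0 (2 * d - (1 - \<alpha>) * N) = (\<alpha> + 4 * eps) * N"
    "max 0 (2 * d - (1 - \<beta>) * N) = (\<beta> + 4 * eps) * N"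
    unfolding d_def using assms by (simp_all add: algebra_simps)
  moreover have "(1 - \<alpha>) * N * ((1 - \<beta>) * N) - (\<alpha> + 4 * eps) * N * ((\<beta> + 4 * eps) * N)
      = 2 * ((1/2 - (\<alpha> + \<beta>) * (1/2 + 2*eps) - 8 * eps^2) * N^2)"
    by (simp add: algebra_simps power2_eq_square)
  ultimately have "steinberg_condition w h I ((1 - \<alpha>) * N) ((1 - \<beta>) * N) d d"
    using assms(1,3,5,6,11) unfolding steinberg_condition_def d_def by auto
  then show ?thesis by (rule steinberg_packing)
qed

end
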